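(* Let $k$ be a field, $A,B$ abelian groups, $R$ an $A$-graded and $S$ a $B$-graded finite-dimensional Frobenius $k$-algebra with forms $\langle-,-\rangle_R$, $\langle-,-\rangle_S$, and $t:A\otimes B\to k^\times$ a bicharacter. Define on $R\otimes^tS$, for homogeneous $r,r'\in R$, $s,s'\in S$, $$\langle r\otimes s,r'\otimes s'\rangle=t(|r'|,|s|)\langle r,r'\rangle_R\langle s,s'\rangle_S,$$ extended bilinearly. Then $\langle-,-\rangle$ makes $R\otimes^tS$ a Frobenius algebra.
   Context: $|r|$ denotes the degree of a homogeneous element. The twisted tensor product $R\otimes^tS$ is the vector space $R\otimes S$ with multiplication $(r\otimes s)(r'\otimes s')=t(|r'|,|s|)\,rr'\otimes ss'$ for homogeneous elements. A Frobenius algebra is a finite-dimensional algebra with a nondegenerate bilinear form satisfying $\langle xy,z\rangle=\langle x,yz\rangle$. *)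

theory Defs
  imports Main
begin

text \<open>A finite-dimensional k-algebra is modelled in coordinates w.r.t. a basis indexed by a
finite type 'i: elements are functions 'i \<Rightarrow> 'k, multiplication is given by structure
constants m i j l (e_i e_j = sum_l m i j l e_l), u is the unit element.
An A-grading is given by a homogeneous basis: deg i is the degree of e_i.\<close>

definition alg_mult :: "('i::finite \<Rightarrow> 'i \<Rightarrow> 'i \<Rightarrow> 'k::field) \<Rightarrow> ('i \<Rightarrow> 'k) \<Rightarrow> ('i \<Rightarrow> 'k) \<Rightarrow> ('i \<Rightarrow> 'k)" where
  "alg_mult m x y = (\<lambda>l. \<Sum>i\<in>UNIV. \<Sum>j\<in>UNIV. x i * y j * m i j l)"

definition is_algebra :: "('i::finite \<Rightarrow> 'i \<Rightarrow> 'i \<Rightarrow> 'k::field) \<Rightarrow> ('i \<Rightarrow> 'k) \<Rightarrow> bool" where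
  "is_algebra m u \<longleftrightarrow>
     (\<forall>x y z. alg_mult m (alg_mult m x y) z = alg_mult m x (alg_mult m y z)) \<and>
     (\<forall>x. alg_mult m u x = x \<and> alg_mult m x u = x)"

definition is_graded_algebra ::
  "('i::finite \<Rightarrow> 'i \<Rightarrow> 'i \<Rightarrow> 'k::field) \<Rightarrow> ('i \<Rightarrow> 'k) \<Rightarrow> ('i \<Rightarrow> 'a::ab_group_add) \<Rightarrow> bool" where
  "is_graded_algebra m u deg \<longleftrightarrow> is_algebra m u \<and>
     (\<forall>i j l. m i j l \<noteq> 0 \<longrightarrow> deg l = deg i + deg j)"

definition bilin_form :: "('i::finite \<Rightarrow> 'i \<Rightarrow> 'k::field) \<Rightarrow> ('i \<Rightarrow> 'k) \<Rightarrow> ('i \<Rightarrow> 'k) \<Rightarrow> 'k" where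
  "bilin_form g x y = (\<Sum>i\<in>UNIV. \<Sum>j\<in>UNIV. x i * y j * g i j)"

definition nondegenerate :: "('i::finite \<Rightarrow> 'i \<Rightarrow> 'k::field) \<Rightarrow> bool" where
  "nondegenerate g \<longleftrightarrow>
     (\<forall>x. (\<forall>y. bilin_form g x y = 0) \<longrightarrow> x = (\<lambda>_. 0)) \<and>
     (\<forall>y. (\<forall>x. bilin_form g x y = 0) \<longrightarrow> y = (\<lambda>_. 0))"

definition frobenius :: "('i::finite \<Rightarrow> 'i \<Rightarrow> 'i \<Rightarrow> 'k::field) \<Rightarrow> ('i \<Rightarrow> 'k) \<Rightarrow> ('i \<Rightarrow> 'i \<Rightarrow> 'k) \<Rightarrow> bool" where
  "frobenius m u g \<longleftrightarrow> is_algebra m u \<and> nondegenerate g \<and>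
     (\<forall>x y z. bilin_form g (alg_mult m x y) z = bilin_form g x (alg_mult m y z))"

definition bicharacter :: "('a::ab_group_add \<Rightarrow> 'b::ab_group_add \<Rightarrow> 'k::field) \<Rightarrow> bool" where
  "bicharacter t \<longleftrightarrow> (\<forall>a b. t a b \<noteq> 0) \<and>
     (\<forall>a a' b. t (a + a') b = t a b * t a' b) \<and>
     (\<forall>a b b'. t a (b + b') = t a b * t a b')"

text \<open>Twisted tensor product R \<otimes>^t S on the basis e_i \<otimes> f_j (homogeneous), extended bilinearly:
(e_i \<otimes> f_j)(e_i' \<otimes> f_j') = t(|e_i'|,|f_j|) e_i e_i' \<otimes> f_j f_j'.\<close>
definition twisted_mult ::
  "('a::ab_group_add \<Rightarrow> 'b::ab_group_add \<Rightarrow> 'k::field) \<Rightarrow> ('i \<Rightarrow> 'a) \<Rightarrow> ('j \<Rightarrow> 'b) \<Rightarrow>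
   ('i \<Rightarrow> 'i \<Rightarrow> 'i \<Rightarrow> 'k) \<Rightarrow> ('j \<Rightarrow> 'j \<Rightarrow> 'j \<Rightarrow> 'k) \<Rightarrow>
   ('i \<times> 'j \<Rightarrow> 'i \<times> 'j \<Rightarrow> 'i \<times> 'j \<Rightarrow> 'k)" where
  "twisted_mult t degR degS mR mS =
     (\<lambda>(i, j) (i', j') (l, n). t (degR i') (degS j) * mR i i' l * mS j j' n)"

definition tensor_unit :: "('i \<Rightarrow> 'k::field) \<Rightarrow> ('j \<Rightarrow> 'k) \<Rightarrow> ('i \<times> 'j \<Rightarrow> 'k)" where
  "tensor_unit uR uS = (\<lambda>(i, j). uR i * uS j)"

definition twisted_form ::
  "('a::ab_group_add \<Rightarrow> 'b::ab_group_add \<Rightarrow> 'k::field) \<Rightarrow> ('i \<Rightarrow> 'a) \<Rightarrow> ('j \<Rightarrow> 'b) \<Rightarrow>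
   ('i \<Rightarrow> 'i \<Rightarrow> 'k) \<Rightarrow> ('j \<Rightarrow> 'j \<Rightarrow> 'k) \<Rightarrow> ('i \<times> 'j \<Rightarrow> 'i \<times> 'j \<Rightarrow> 'k)" where
  "twisted_form t degR degS gR gS =
     (\<lambda>(i, j) (i', j'). t (degR i') (degS j) * gR i i' * gS j j')"

end

theory Submission
  imports Defs
begin

(* Everything is checked on the homogeneous basis e_i \<otimes> f_j.
   Only products with nonzero structure constants contribute, and for those the degrees add, so by
   bimultiplicativity of t the scalar factors on the two sides of the invariance identity
   <xy, z> = <x, yz> coincide, and the identity reduces to the same identities in R and S.
   The coordinate functionals of the twisted product are themselves twisted forms of the
   coordinate functionals of R and S, so associativity is a special case of invariance.
   The unit of a graded algebra is homogeneous of degree 0 and t(a, 0) = t(0, b) = 1, hence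
   1 \<otimes> 1 is a unit.  Since t never vanishes, a vector in a kernel of the twisted form is
   annihilated first by the form of S and then by the form of R. *)

definition basis_vec :: "'i \<Rightarrow> 'i \<Rightarrow> 'k::field" where
  "basis_vec i = (\<lambda>l. if l = i then 1 else 0)"

lemmas basis_vec_simps =
  basis_vec_def if_distrib[where f="\<lambda>a. a * _"] if_distrib[where f="\<lambda>a. _ * a"]

lemma bilin_form_eq_sum_rows: "bilin_form g x y = (\<Sum>i\<in>UNIV. x i * (\<Sum>j\<in>UNIV. g i j * y j))"
  by (simp add: bilin_form_def sum_distrib_left mult_ac)

lemma bilin_form_eq_sum_cols: "bilin_form g x y = (\<Sum>j\<in>UNIV. (\<Sum>i\<in>UNIV. x i * g i j) * y j)"
  unfolding bilin_form_def sum_distrib_right by (subst sum.swap) (simp add: mult_ac)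

lemma alg_mult_basis_vec: "alg_mult m (basis_vec i) (basis_vec j) = m i j"
  by (simp add: alg_mult_def basis_vec_simps cong: if_cong)

lemma bilin_form_basis_vec_left: "bilin_form g (basis_vec i) y = (\<Sum>j\<in>UNIV. g i j * y j)"
  by (simp add: bilin_form_eq_sum_rows basis_vec_simps cong: if_cong)

lemma bilin_form_basis_vec_right: "bilin_form g x (basis_vec k) = (\<Sum>i\<in>UNIV. x i * g i k)"
  by (simp add: bilin_form_eq_sum_cols basis_vec_simps cong: if_cong)

lemma alg_mult_eq_bilin_form: "alg_mult m x y n = bilin_form (\<lambda>i j. m i j n) x y"
  by (simp add: alg_mult_def bilin_form_def)

lemma bilin_form_alg_mult_left:
  "bilin_form g (alg_mult m x y) z =
     (\<Sum>i\<in>UNIV. \<Sum>j\<in>UNIV. \<Sum>k\<in>UNIV. x i * y j * z k * (\<Sum>l\<in>UNIV. m i j l * g l k))"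
proof -
  let ?f = "\<lambda>i j k l. x i * y j * z k * (m i j l * g l k)"
  have "bilin_form g (alg_mult m x y) z = (\<Sum>l\<in>UNIV. \<Sum>k\<in>UNIV. \<Sum>i\<in>UNIV. \<Sum>j\<in>UNIV. ?f i j k l)"
    by (simp add: alg_mult_def bilin_form_def sum_distrib_left sum_distrib_right mult_ac)
  also have "\<dots> = (\<Sum>k\<in>UNIV. \<Sum>i\<in>UNIV. \<Sum>l\<in>UNIV. \<Sum>j\<in>UNIV. ?f i j k l)"
    by (subst sum.swap) (rule sum.cong[OF refl], rule sum.swap)
  also have "\<dots> = (\<Sum>i\<in>UNIV. \<Sum>k\<in>UNIV. \<Sum>j\<in>UNIV. \<Sum>l\<in>UNIV. ?f i j k l)"
    by (subst sum.swap) (intro sum.cong[OF refl] sum.swap)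
  also have "\<dots> = (\<Sum>i\<in>UNIV. \<Sum>j\<in>UNIV. \<Sum>k\<in>UNIV. \<Sum>l\<in>UNIV. ?f i j k l)"
    by (intro sum.cong[OF refl] sum.swap)
  finally show ?thesis
    by (simp add: sum_distrib_left)
qed

lemma bilin_form_alg_mult_right:
  "bilin_form g x (alg_mult m y z) =
     (\<Sum>i\<in>UNIV. \<Sum>j\<in>UNIV. \<Sum>k\<in>UNIV. x i * y j * z k * (\<Sum>l\<in>UNIV. m j k l * g i l))"
proof -
  let ?f = "\<lambda>i j k l. x i * y j * z k * (m j k l * g i l)"
  have "bilin_form g x (alg_mult m y z) = (\<Sum>i\<in>UNIV. \<Sum>l\<in>UNIV. \<Sum>j\<in>UNIV. \<Sum>k\<in>UNIV. ?f i j k l)"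
    by (simp add: alg_mult_def bilin_form_def sum_distrib_left sum_distrib_right mult_ac)
  also have "\<dots> = (\<Sum>i\<in>UNIV. \<Sum>j\<in>UNIV. \<Sum>k\<in>UNIV. \<Sum>l\<in>UNIV. ?f i j k l)"
    by (rule sum.cong[OF refl], subst sum.swap) (intro sum.cong[OF refl] sum.swap)
  finally show ?thesis
    by (simp add: sum_distrib_left)
qed

definition invariant_form :: "('i::finite \<Rightarrow> 'i \<Rightarrow> 'i \<Rightarrow> 'k::field) \<Rightarrow> ('i \<Rightarrow> 'i \<Rightarrow> 'k) \<Rightarrow> bool" where
  "invariant_form m g \<longleftrightarrow>
     (\<forall>x y z. bilin_form g (alg_mult m x y) z = bilin_form g x (alg_mult m y z))"

lemma invariant_form_iff:
  "invariant_form m g \<longleftrightarrow>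
     (\<forall>i j k. (\<Sum>l\<in>UNIV. m i j l * g l k) = (\<Sum>l\<in>UNIV. m j k l * g i l))"
proof
  assume "invariant_form m g"
  then have "bilin_form g (alg_mult m (basis_vec i) (basis_vec j)) (basis_vec k) =
      bilin_form g (basis_vec i) (alg_mult m (basis_vec j) (basis_vec k))" for i j k
    unfolding invariant_form_def by blast
  then show "\<forall>i j k. (\<Sum>l\<in>UNIV. m i j l * g l k) = (\<Sum>l\<in>UNIV. m j k l * g i l)"
    by (simp add: alg_mult_basis_vec bilin_form_basis_vec_left bilin_form_basis_vec_right mult.commute)
qed (simp add: invariant_form_def bilin_form_alg_mult_left bilin_form_alg_mult_right)

lemma alg_mult_assoc_iff:
  "(\<forall>x y z. alg_mult m (alg_mult m x y) z = alg_mult m x (alg_mult m y z)) \<longleftrightarrow>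
     (\<forall>n. invariant_form m (\<lambda>i j. m i j n))"
  by (simp only: fun_eq_iff invariant_form_def alg_mult_eq_bilin_form) blast

lemma sum_mult_basis_vec:
  fixes x :: "'i::finite \<Rightarrow> 'k::field"
  shows "(\<Sum>j\<in>UNIV. x j * basis_vec j n) = x n"
  by (simp add: basis_vec_def if_distrib[where f="\<lambda>a. _ * a"] cong: if_cong)

lemma alg_mult_left_unit_iff:
  "(\<forall>x. alg_mult m u x = x) \<longleftrightarrow> (\<forall>j n. (\<Sum>i\<in>UNIV. u i * m i j n) = basis_vec j n)"
proof
  assume "\<forall>x. alg_mult m u x = x"
  then have "alg_mult m u (basis_vec j) n = basis_vec j n" for j n
    by simp
  then show "\<forall>j n. (\<Sum>i\<in>UNIV. u i * m i j n) = basis_vec j n"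
    by (simp add: alg_mult_eq_bilin_form bilin_form_basis_vec_right)
qed (simp add: fun_eq_iff alg_mult_eq_bilin_form bilin_form_eq_sum_cols sum_mult_basis_vec mult.commute)

lemma alg_mult_right_unit_iff:
  "(\<forall>x. alg_mult m x u = x) \<longleftrightarrow> (\<forall>i n. (\<Sum>j\<in>UNIV. m i j n * u j) = basis_vec i n)"
proof
  assume "\<forall>x. alg_mult m x u = x"
  then have "alg_mult m (basis_vec i) u n = basis_vec i n" for i n
    by simp
  then show "\<forall>i n. (\<Sum>j\<in>UNIV. m i j n * u j) = basis_vec i n"
    by (simp add: alg_mult_eq_bilin_form bilin_form_basis_vec_left)
qed (simp add: fun_eq_iff alg_mult_eq_bilin_form bilin_form_eq_sum_rows sum_mult_basis_vec)

lemma nondegenerate_iff: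
  "nondegenerate g \<longleftrightarrow>
     (\<forall>x. (\<forall>k. (\<Sum>i\<in>UNIV. x i * g i k) = 0) \<longrightarrow> x = (\<lambda>_. 0)) \<and>
     (\<forall>y. (\<forall>i. (\<Sum>j\<in>UNIV. g i j * y j) = 0) \<longrightarrow> y = (\<lambda>_. 0))"
proof -
  have "(\<forall>y. bilin_form g x y = 0) \<longleftrightarrow> (\<forall>k. (\<Sum>i\<in>UNIV. x i * g i k) = 0)" for x
    using bilin_form_basis_vec_right[of g x] by (auto simp: bilin_form_eq_sum_cols)
  moreover have "(\<forall>x. bilin_form g x y = 0) \<longleftrightarrow> (\<forall>i. (\<Sum>j\<in>UNIV. g i j * y j) = 0)" for y
    using bilin_form_basis_vec_left[of g _ y] by (auto simp: bilin_form_eq_sum_rows)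
  ultimately show ?thesis
    unfolding nondegenerate_def by simp
qed

lemma bicharacter_zero_left: "bicharacter t \<Longrightarrow> t 0 b = 1"
  unfolding bicharacter_def by (metis add_0 mult_cancel_left1)

lemma bicharacter_zero_right: "bicharacter t \<Longrightarrow> t a 0 = 1"
  unfolding bicharacter_def by (metis add_0 mult_cancel_left1)

lemma graded_unit_deg_zero:
  assumes "is_graded_algebra m u deg" and "u n \<noteq> 0"
  shows "deg n = 0"
proof -
  have unit: "\<forall>x. alg_mult m u x = x" "\<forall>x. alg_mult m x u = x"
    and graded: "\<And>i j l. m i j l \<noteq> 0 \<Longrightarrow> deg l = deg i + deg j"
    using assms(1) unfolding is_graded_algebra_def is_algebra_def by auto
  \<comment> \<open>The degree-zero part u0 of u is again a left unit, so u0 = u0 u = u.\<close>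
  define u0 where "u0 i = (if deg i = 0 then u i else 0)" for i
  have "(\<Sum>i\<in>UNIV. u0 i * m i j l) = basis_vec j l" for j l
  proof (cases "deg l = deg j")
    case True
    then have "u0 i * m i j l = u i * m i j l" for i
      using graded[of i j l] by (auto simp: u0_def)
    then have "(\<Sum>i\<in>UNIV. u0 i * m i j l) = (\<Sum>i\<in>UNIV. u i * m i j l)"
      by (rule sum.cong[OF refl])
    also have "\<dots> = basis_vec j l"
      using unit(1) alg_mult_left_unit_iff by blast
    finally show ?thesis .
  next
    case False
    then have "u0 i * m i j l = 0" for i
      using graded[of i j l] by (auto simp: u0_def)
    then show ?thesis
      using False by (auto simp: basis_vec_def simp del: mult_eq_0_iff)
  qed
  then have "alg_mult m u0 u = u"
    using alg_mult_left_unit_iff by blast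
  then have "u0 = u"
    using unit(2) by simp
  then show ?thesis
    using assms(2) by (metis u0_def)
qed

lemma sum_UNIV_pair: "(\<Sum>p\<in>UNIV. f p) = (\<Sum>a\<in>UNIV. \<Sum>b\<in>UNIV. f (a, b))"
  by (simp add: sum.cartesian_product)

lemma sum_sum_scaled_product:
  "(\<Sum>a\<in>A. \<Sum>b\<in>B. c * X a * Y b) = c * (\<Sum>a\<in>A. X a) * (\<Sum>b\<in>B. Y b :: 'k::field)"
  by (simp add: sum_distrib_left sum_distrib_right mult_ac)

lemma twisted_mult_eq_twisted_form:
  "twisted_mult t degR degS mR mS p q (l, n) =
     twisted_form t degR degS (\<lambda>a b. mR a b l) (\<lambda>a b. mS a b n) p q"
  by (cases p; cases q) (simp add: twisted_mult_def twisted_form_def)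

lemma invariant_form_twisted:
  fixes mR :: "'i::finite \<Rightarrow> 'i \<Rightarrow> 'i \<Rightarrow> 'k::field" and mS :: "'j::finite \<Rightarrow> 'j \<Rightarrow> 'j \<Rightarrow> 'k"
  assumes invR: "invariant_form mR gR" and invS: "invariant_form mS gS"
    and gradedR: "\<And>i j l. mR i j l \<noteq> 0 \<Longrightarrow> degR l = degR i + degR j"
    and gradedS: "\<And>i j l. mS i j l \<noteq> 0 \<Longrightarrow> degS l = degS i + degS j"
    and "bicharacter t"
  shows "invariant_form (twisted_mult t degR degS mR mS) (twisted_form t degR degS gR gS)"
  unfolding invariant_form_iff
proof (intro allI)
  fix p1 p2 p3 :: "'i \<times> 'j"
  obtain i1 j1 i2 j2 i3 j3 where p: "p1 = (i1, j1)" "p2 = (i2, j2)" "p3 = (i3, j3)"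
    by (metis surj_pair)
  let ?T = "twisted_mult t degR degS mR mS" and ?G = "twisted_form t degR degS gR gS"
  have t_add: "t (a + a') b = t a b * t a' b" "t a (b + b') = t a b * t a b'" for a a' b b'
    using \<open>bicharacter t\<close> unfolding bicharacter_def by auto
  \<comment> \<open>the common twist of both sides, by additivity of degrees on nonzero structure constants\<close>
  define c where "c = t (degR i2) (degS j1) * t (degR i3) (degS j1) * t (degR i3) (degS j2)"
  have left: "?T (i1, j1) (i2, j2) (l, n) * ?G (l, n) (i3, j3) =
      c * (mR i1 i2 l * gR l i3) * (mS j1 j2 n * gS n j3)" for l n
    by (cases "mS j1 j2 n = 0")
      (auto simp: twisted_mult_def twisted_form_def c_def gradedS t_add mult_ac)
  have right: "?T (i2, j2) (i3, j3) (l, n) * ?G (i1, j1) (l, n) =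
      c * (mR i2 i3 l * gR i1 l) * (mS j2 j3 n * gS j1 n)" for l n
    by (cases "mR i2 i3 l = 0")
      (auto simp: twisted_mult_def twisted_form_def c_def gradedR t_add mult_ac)
  have "(\<Sum>q\<in>UNIV. ?T p1 p2 q * ?G q p3) =
      c * (\<Sum>l\<in>UNIV. mR i1 i2 l * gR l i3) * (\<Sum>n\<in>UNIV. mS j1 j2 n * gS n j3)"
    by (simp only: p left sum_UNIV_pair sum_sum_scaled_product)
  also have "\<dots> = c * (\<Sum>l\<in>UNIV. mR i2 i3 l * gR i1 l) * (\<Sum>n\<in>UNIV. mS j2 j3 n * gS j1 n)"
    using invR invS by (simp add: invariant_form_iff)
  also have "\<dots> = (\<Sum>q\<in>UNIV. ?T p2 p3 q * ?G p1 q)"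
    by (simp only: p right sum_UNIV_pair sum_sum_scaled_product)
  finally show "(\<Sum>q\<in>UNIV. ?T p1 p2 q * ?G q p3) = (\<Sum>q\<in>UNIV. ?T p2 p3 q * ?G p1 q)" .
qed

lemma basis_vec_pair: "basis_vec (i, j) (l, n) = basis_vec i l * basis_vec j n"
  by (simp add: basis_vec_def)

lemma is_algebra_twisted_mult:
  assumes gradedR: "is_graded_algebra mR uR degR" and gradedS: "is_graded_algebra mS uS degS"
    and t: "bicharacter t"
  shows "is_algebra (twisted_mult t degR degS mR mS) (tensor_unit uR uS)"
proof -
  let ?T = "twisted_mult t degR degS mR mS" and ?U = "tensor_unit uR uS"
  have algR: "is_algebra mR uR" and algS: "is_algebra mS uS"
    and degR_add: "\<And>i j l. mR i j l \<noteq> 0 \<Longrightarrow> degR l = degR i + degR j"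
    and degS_add: "\<And>i j l. mS i j l \<noteq> 0 \<Longrightarrow> degS l = degS i + degS j"
    using gradedR gradedS unfolding is_graded_algebra_def by auto
  have left_unitR: "\<forall>j n. (\<Sum>i\<in>UNIV. uR i * mR i j n) = basis_vec j n"
    and left_unitS: "\<forall>j n. (\<Sum>i\<in>UNIV. uS i * mS i j n) = basis_vec j n"
    and right_unitR: "\<forall>i n. (\<Sum>j\<in>UNIV. mR i j n * uR j) = basis_vec i n"
    and right_unitS: "\<forall>i n. (\<Sum>j\<in>UNIV. mS i j n * uS j) = basis_vec i n"
    using algR algS unfolding is_algebra_def alg_mult_left_unit_iff[symmetric]
      alg_mult_right_unit_iff[symmetric] by blast+
  have "invariant_form ?T (\<lambda>p q. ?T p q (l, n))" for l n
  proof -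
    have "invariant_form mR (\<lambda>a b. mR a b l)" "invariant_form mS (\<lambda>a b. mS a b n)"
      using algR algS unfolding is_algebra_def alg_mult_assoc_iff by blast+
    then show ?thesis
      using invariant_form_twisted[OF _ _ degR_add degS_add t] by (simp add: twisted_mult_eq_twisted_form)
  qed
  then have assoc: "\<forall>x y z. alg_mult ?T (alg_mult ?T x y) z = alg_mult ?T x (alg_mult ?T y z)"
    unfolding alg_mult_assoc_iff by simp
  have "?U (i, j) * ?T (i, j) (i', j') (l, n) = (uR i * mR i i' l) * (uS j * mS j j' n)"
    for i j i' j' l n
    using graded_unit_deg_zero[OF gradedS, of j]
    by (cases "uS j = 0") (auto simp: tensor_unit_def twisted_mult_def bicharacter_zero_right[OF t])
  then have "(\<Sum>p\<in>UNIV. ?U p * ?T p (i', j') (l, n)) = basis_vec (i', j') (l, n)" for i' j' l n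
    using left_unitR left_unitS by (simp add: sum_UNIV_pair sum_product[symmetric] basis_vec_pair)
  then have left_unit: "\<forall>x. alg_mult ?T ?U x = x"
    by (simp add: alg_mult_left_unit_iff)
  have "?T (i, j) (i', j') (l, n) * ?U (i', j') = (mR i i' l * uR i') * (mS j j' n * uS j')"
    for i j i' j' l n
    using graded_unit_deg_zero[OF gradedR, of i']
    by (cases "uR i' = 0") (auto simp: tensor_unit_def twisted_mult_def bicharacter_zero_left[OF t])
  then have "(\<Sum>p\<in>UNIV. ?T (i, j) p (l, n) * ?U p) = basis_vec (i, j) (l, n)" for i j l n
    using right_unitR right_unitS by (simp add: sum_UNIV_pair sum_product[symmetric] basis_vec_pair)
  then have right_unit: "\<forall>x. alg_mult ?T x ?U = x"
    by (simp add: alg_mult_right_unit_iff)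
  show ?thesis
    unfolding is_algebra_def using assoc left_unit right_unit by blast
qed

lemma nondegenerate_twisted:
  fixes gR :: "'i::finite \<Rightarrow> 'i \<Rightarrow> 'k::field" and gS :: "'j::finite \<Rightarrow> 'j \<Rightarrow> 'k"
  assumes ndR: "nondegenerate gR" and ndS: "nondegenerate gS" and c: "\<And>a b. c a b \<noteq> 0"
  shows "nondegenerate (\<lambda>(i, j) (i', j'). c i' j * gR i i' * gS j j')"
  (is "nondegenerate ?G")
proof -
  have kerR_left: "x = (\<lambda>_. 0)" if "\<And>k. (\<Sum>i\<in>UNIV. x i * gR i k) = 0" for x
    using ndR that unfolding nondegenerate_iff by blast
  have kerS_left: "x = (\<lambda>_. 0)" if "\<And>k. (\<Sum>i\<in>UNIV. x i * gS i k) = 0" for x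
    using ndS that unfolding nondegenerate_iff by blast
  have kerR_right: "y = (\<lambda>_. 0)" if "\<And>k. (\<Sum>j\<in>UNIV. gR k j * y j) = 0" for y
    using ndR that unfolding nondegenerate_iff by blast
  have kerS_right: "y = (\<lambda>_. 0)" if "\<And>k. (\<Sum>j\<in>UNIV. gS k j * y j) = 0" for y
    using ndS that unfolding nondegenerate_iff by blast
  show ?thesis
    unfolding nondegenerate_iff
  proof (intro conjI allI impI)
    fix x :: "'i \<times> 'j \<Rightarrow> 'k"
    assume x: "\<forall>k. (\<Sum>p\<in>UNIV. x p * ?G p k) = 0"
    have "(\<Sum>i\<in>UNIV. x (i, j) * gR i i') = 0" for i' j
    proof -
      have "(\<Sum>j\<in>UNIV. (c i' j * (\<Sum>i\<in>UNIV. x (i, j) * gR i i')) * gS j j') = 0" for j'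
      proof -
        have "(\<Sum>j\<in>UNIV. (c i' j * (\<Sum>i\<in>UNIV. x (i, j) * gR i i')) * gS j j') =
            (\<Sum>j\<in>UNIV. \<Sum>i\<in>UNIV. x (i, j) * ?G (i, j) (i', j'))"
          by (simp add: sum_distrib_left sum_distrib_right mult_ac)
        also have "\<dots> = (\<Sum>p\<in>UNIV. x p * ?G p (i', j'))"
          unfolding sum_UNIV_pair by (rule sum.swap)
        also have "\<dots> = 0"
          using x by blast
        finally show ?thesis .
      qed
      then have "(\<lambda>j. c i' j * (\<Sum>i\<in>UNIV. x (i, j) * gR i i')) = (\<lambda>_. 0)"
        by (rule kerS_left)
      then show ?thesis
        using c by (simp add: fun_eq_iff)
    qed
    then have "(\<lambda>i. x (i, j)) = (\<lambda>_. 0)" for j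
      by (rule kerR_left)
    then show "x = (\<lambda>_. 0)"
      by (simp add: fun_eq_iff)
  next
    fix y :: "'i \<times> 'j \<Rightarrow> 'k"
    assume y: "\<forall>k. (\<Sum>p\<in>UNIV. ?G k p * y p) = 0"
    have "(\<Sum>j'\<in>UNIV. gS j j' * y (i', j')) = 0" for i' j
    proof -
      have "(\<Sum>i'\<in>UNIV. gR i i' * (c i' j * (\<Sum>j'\<in>UNIV. gS j j' * y (i', j')))) = 0" for i
      proof -
        have "(\<Sum>i'\<in>UNIV. gR i i' * (c i' j * (\<Sum>j'\<in>UNIV. gS j j' * y (i', j')))) =
            (\<Sum>p\<in>UNIV. ?G (i, j) p * y p)"
          by (simp add: sum_UNIV_pair sum_distrib_left mult_ac)
        also have "\<dots> = 0"
          using y by blast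
        finally show ?thesis .
      qed
      then have "(\<lambda>i'. c i' j * (\<Sum>j'\<in>UNIV. gS j j' * y (i', j'))) = (\<lambda>_. 0)"
        by (rule kerR_right)
      then show ?thesis
        using c by (simp add: fun_eq_iff)
    qed
    then have "(\<lambda>j. y (i, j)) = (\<lambda>_. 0)" for i
      by (rule kerS_right)
    then show "y = (\<lambda>_. 0)"
      by (simp add: fun_eq_iff)
  qed
qed

theorem mainTheorem3:
  fixes mR :: "'i::finite \<Rightarrow> 'i \<Rightarrow> 'i \<Rightarrow> 'k::field" and uR :: "'i \<Rightarrow> 'k"
    and degR :: "'i \<Rightarrow> 'a::ab_group_add" and gR :: "'i \<Rightarrow> 'i \<Rightarrow> 'k"
    and mS :: "'j::finite \<Rightarrow> 'j \<Rightarrow> 'j \<Rightarrow> 'k" and uS :: "'j \<Rightarrow> 'k"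
    and degS :: "'j \<Rightarrow> 'b::ab_group_add" and gS :: "'j \<Rightarrow> 'j \<Rightarrow> 'k"
    and t :: "'a \<Rightarrow> 'b \<Rightarrow> 'k"
  assumes "is_graded_algebra mR uR degR" and "frobenius mR uR gR"
    and "is_graded_algebra mS uS degS" and "frobenius mS uS gS"
    and "bicharacter t"
  shows "frobenius (twisted_mult t degR degS mR mS) (tensor_unit uR uS)
           (twisted_form t degR degS gR gS)"
proof -
  have invR: "invariant_form mR gR" and ndR: "nondegenerate gR"
    and invS: "invariant_form mS gS" and ndS: "nondegenerate gS"
    using assms(2,4) unfolding frobenius_def invariant_form_def by auto
  have gradedR: "\<And>i j l. mR i j l \<noteq> 0 \<Longrightarrow> degR l = degR i + degR j"
    and gradedS: "\<And>i j l. mS i j l \<noteq> 0 \<Longrightarrow> degS l = degS i + degS j"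
    and t_nonzero: "\<And>a b. t (degR a) (degS b) \<noteq> 0"
    using assms(1,3,5) unfolding is_graded_algebra_def bicharacter_def by auto
  have "is_algebra (twisted_mult t degR degS mR mS) (tensor_unit uR uS)"
    using assms(1,3,5) by (rule is_algebra_twisted_mult)
  moreover have "nondegenerate (twisted_form t degR degS gR gS)"
    unfolding twisted_form_def using ndR ndS t_nonzero by (rule nondegenerate_twisted)
  moreover have "invariant_form (twisted_mult t degR degS mR mS) (twisted_form t degR degS gR gS)"
    using invR invS gradedR gradedS assms(5) by (rule invariant_form_twisted)
  ultimately show ?thesis
    unfolding frobenius_def invariant_form_def by blast
qed

end
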